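(* Let $\mathrm{HC}$ be the symmetric operad generated by operations $m^{2p}_{\underline t}$ of arity $t\geqslant2$ and homological degree $2p\geqslant0$, each spanning the trivial representation of $S_t$, with $\overline m_I=\sum_{p\geqslant0}m^{2p}_I$, subject, for each $n\geqslant3$ and pairwise distinct $i,j,j'\in\underline n$, to \[ \sum_{\substack{I\sqcup J=\underline n\\ i\in I;\ j,j'\in J}}\overline m_{I\sqcup\{\star\}}\circ_\star\overline m_J=\sum_{\substack{I\sqcup J=\underline n\\ j\in I;\ i,j'\in J}}\overline m_{I\sqcup\{\star\}}\circ_\star\overline m_J, \] understood degree by degree. Then, for $n\geqslant2$: the element \[ \sum_{\substack{I\sqcup J_1=\underline n\\ j_1,j_2\in J_1}}\overline m_{I\sqcup\{\star\}}\circ_\star\overline m_{J_1} \] does not depend on the choice of distinct $j_1,j_2\in\underline n$; and for each $i\in\underline n$, the element \[ \sum_{\substack{I\sqcup J_1=\underline n\\ j_1\in J_1,\ i\in I}}\overline m_{J_1\sqcup\{\star\}}\circ_\star\overline m_I \] does not depend on the choice of $j_1\in\underline n\setminus\{i\}$. (In all sums only decompositions for which the indicated generators exist, i.e. have arity at least $2$, occur.)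
   Context: Work over a field $\Bbbk$ of characteristic zero, homologically graded vector spaces; $\underline n=\{1,\dots,n\}$. Symmetric operads are species with compositions $\circ_\star:\mathcal P(I\sqcup\{\star\})\otimes\mathcal P(J)\to\mathcal P(I\sqcup J)$; $x_I$ denotes the relabeling of a fully symmetric operation to a set $I$ of the appropriate size; relations are imposed with all relabelings. Identities involving the infinite sums $\overline m$ are to be read as families of identities obtained by separating terms by total homological degree. *)

theory Defs
  imports Main "HOL-Library.Function_Algebras"
begin

(* Weight-2 part of the free operad on the generators m^{2p}_t (t >= 2, p >= 0,
   each spanning the trivial S_t-representation), in arity n = {1..n}.
   A two-vertex tree with leaves {1..n} is determined by the leaf set J of the
   upper (child) vertex, with root labelled by I \<union> {\<star>}, I = {1..n} - J.
   The basis element (J, p, q) stands for  m^{2p}_{I \<union> {\<star>}} \<circ>_\<star> m^{2q}_J,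
   of homological degree 2(p+q).  All degrees are even, so there are no signs.
   Elements are formal (possibly infinite, finite in each degree) combinations,
   i.e. arbitrary coefficient functions. *)
type_synonym 'k hc2 = "nat set \<times> nat \<times> nat \<Rightarrow> 'k"

(* J is the child leaf set of an existing two-vertex tree in arity n:
   child arity |J| >= 2, root arity |I|+1 >= 2 *)
definition valid_child :: "nat \<Rightarrow> nat set \<Rightarrow> bool" where
  "valid_child n J \<longleftrightarrow> J \<subseteq> {1..n} \<and> 2 \<le> card J \<and> J \<noteq> {1..n}"

(* mbar_{({1..n}-J) \<union> {\<star>}} \<circ>_\<star> mbar_J = \<Sum>_{p,q} m^{2p} \<circ>_\<star> m^{2q} *)
definition mbar_comp :: "nat set \<Rightarrow> 'k::field hc2" where
  "mbar_comp J = (\<lambda>(J', p, q). if J' = J then 1 else 0)"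

definition deg_part :: "nat \<Rightarrow> 'k::zero hc2 \<Rightarrow> 'k hc2" where
  "deg_part d x = (\<lambda>(J, p, q). if p + q = d then x (J, p, q) else 0)"

definition hc_rel :: "nat \<Rightarrow> nat \<Rightarrow> nat \<Rightarrow> nat \<Rightarrow> 'k::field hc2" where
  "hc_rel n i j j' =
     (\<Sum>J | valid_child n J \<and> i \<notin> J \<and> j \<in> J \<and> j' \<in> J. mbar_comp J)
   - (\<Sum>J | valid_child n J \<and> j \<notin> J \<and> i \<in> J \<and> j' \<in> J. mbar_comp J)"

definition rel_triples :: "nat \<Rightarrow> (nat \<times> nat \<times> nat) set" where
  "rel_triples n = {(i, j, j'). 3 \<le> n \<and> i \<in> {1..n} \<and> j \<in> {1..n} \<and> j' \<in> {1..n}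
                               \<and> i \<noteq> j \<and> i \<noteq> j' \<and> j \<noteq> j'}"

(* equality in HC(n) of weight-2 elements, degree by degree: the difference of
   the degree-2d components lies in the span of the degree-2d components of the
   relations in arity n (all relabellings, i.e. all distinct triples). *)
definition hc_eq :: "nat \<Rightarrow> 'k::field hc2 \<Rightarrow> 'k hc2 \<Rightarrow> bool" where
  "hc_eq n x y \<longleftrightarrow>
     (\<forall>d. \<exists>c :: nat \<times> nat \<times> nat \<Rightarrow> 'k.
        deg_part d (x - y) =
          (\<Sum>t\<in>rel_triples n. (\<lambda>\<tau>. c t * deg_part d (case t of (i, j, j') \<Rightarrow> hc_rel n i j j') \<tau>)))"

definition elemA :: "nat \<Rightarrow> nat \<Rightarrow> nat \<Rightarrow> 'k::field hc2" where
  "elemA n j1 j2 = (\<Sum>J | valid_child n J \<and> j1 \<in> J \<and> j2 \<in> J. mbar_comp J)"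

(* \<Sum>_{I \<union> J1 = n, j1 \<in> J1, i \<in> I} mbar_{J1 \<union> \<star>} \<circ>_\<star> mbar_I ; the child set is I *)
definition elemB :: "nat \<Rightarrow> nat \<Rightarrow> nat \<Rightarrow> 'k::field hc2" where
  "elemB n i j1 = (\<Sum>I | valid_child n I \<and> i \<in> I \<and> j1 \<notin> I. mbar_comp I)"

end

theory Submission
  imports Defs
begin

(* The two families are linked by relations exactly, before passing to degrees, and deg_part
   is linear. Replacing the leaf a by k in elemA n a b changes it by precisely the relation
   for (k, a, b): the child sets containing all of a, b, k cancel. Likewise
   elemB n i j - elemB n i j' is the difference of the relations for (j, i, j') and (j', i, j). *)

lemma sum_fun_apply: "(sum F A :: 'a \<Rightarrow> 'b::comm_monoid_add) x = (\<Sum>a\<in>A. F a x)"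
  by (induction A rule: infinite_finite_induct) auto

abbreviation hc_relation :: "nat \<Rightarrow> nat \<times> nat \<times> nat \<Rightarrow> 'k::field hc2" where
  "hc_relation n t \<equiv> case t of (i, j, j') \<Rightarrow> hc_rel n i j j'"

definition in_rel_span :: "nat \<Rightarrow> 'k::field hc2 \<Rightarrow> bool" where
  "in_rel_span n z \<longleftrightarrow>
     (\<exists>c. z = (\<Sum>t\<in>rel_triples n. (\<lambda>\<tau>. c t * hc_relation n t \<tau>)))"

lemma finite_rel_triples: "finite (rel_triples n)"
proof (rule finite_subset)
  show "rel_triples n \<subseteq> {1..n} \<times> {1..n} \<times> {1..n}"
    unfolding rel_triples_def by auto
qed auto

lemma rel_triplesI:
  "\<lbrakk>i \<in> {1..n}; j \<in> {1..n}; j' \<in> {1..n}; i \<noteq> j; i \<noteq> j'; j \<noteq> j'\<rbrakk>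
     \<Longrightarrow> (i, j, j') \<in> rel_triples n"
  unfolding rel_triples_def by auto

lemma deg_part_sum: "deg_part d (sum F A :: 'k::field hc2) = (\<Sum>a\<in>A. deg_part d (F a))"
  by (rule ext) (auto simp: deg_part_def sum_fun_apply)

lemma deg_part_scale:
  "deg_part d (\<lambda>\<tau>. c * (f :: 'k::field hc2) \<tau>) = (\<lambda>\<tau>. c * deg_part d f \<tau>)"
  by (rule ext) (auto simp: deg_part_def)

lemma hc_eq_if_in_rel_span:
  assumes "in_rel_span n (x - y)"
  shows "hc_eq n x (y :: 'k::field hc2)"
proof -
  obtain c where "x - y = (\<Sum>t\<in>rel_triples n. (\<lambda>\<tau>. c t * hc_relation n t \<tau>))"
    using assms unfolding in_rel_span_def by blast
  then have "deg_part d (x - y)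
      = (\<Sum>t\<in>rel_triples n. (\<lambda>\<tau>. c t * deg_part d (hc_relation n t) \<tau>))" for d
    by (simp add: deg_part_sum deg_part_scale)
  then show ?thesis
    unfolding hc_eq_def by blast
qed

lemma in_rel_span_zero: "in_rel_span n (0 :: 'k::field hc2)"
  unfolding in_rel_span_def
  by (rule exI[of _ "\<lambda>_. 0"]) (simp add: fun_eq_iff sum_fun_apply)

lemma in_rel_span_relation:
  assumes "t \<in> rel_triples n"
  shows "in_rel_span n (hc_relation n t :: 'k::field hc2)"
  unfolding in_rel_span_def
proof (rule exI[of _ "\<lambda>s. if s = t then 1 else 0"])
  show "hc_relation n t
      = (\<Sum>s\<in>rel_triples n. (\<lambda>\<tau>. (if s = t then 1 else 0) * (hc_relation n s \<tau> :: 'k)))"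
    using assms finite_rel_triples[of n]
    by (simp add: fun_eq_iff sum_fun_apply if_distrib[of "\<lambda>c. c * _"] cong: if_cong)
qed

lemma in_rel_span_add:
  assumes "in_rel_span n x" "in_rel_span n (y :: 'k::field hc2)"
  shows "in_rel_span n (x + y)"
proof -
  obtain c c' where "x = (\<Sum>t\<in>rel_triples n. (\<lambda>\<tau>. c t * hc_relation n t \<tau>))"
    and "y = (\<Sum>t\<in>rel_triples n. (\<lambda>\<tau>. c' t * hc_relation n t \<tau>))"
    using assms unfolding in_rel_span_def by blast
  then have "x + y = (\<Sum>t\<in>rel_triples n. (\<lambda>\<tau>. (c t + c' t) * hc_relation n t \<tau>))"
    by (simp add: fun_eq_iff sum_fun_apply sum.distrib[symmetric] distrib_right)
  then show ?thesis
    unfolding in_rel_span_def by (rule exI[of _ "\<lambda>t. c t + c' t"])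
qed

lemma in_rel_span_uminus:
  assumes "in_rel_span n (x :: 'k::field hc2)"
  shows "in_rel_span n (- x)"
proof -
  obtain c where "x = (\<Sum>t\<in>rel_triples n. (\<lambda>\<tau>. c t * hc_relation n t \<tau>))"
    using assms unfolding in_rel_span_def by blast
  then have "- x = (\<Sum>t\<in>rel_triples n. (\<lambda>\<tau>. (- c t) * hc_relation n t \<tau>))"
    by (simp add: fun_eq_iff sum_fun_apply sum_negf[symmetric])
  then show ?thesis
    unfolding in_rel_span_def by (rule exI[of _ "\<lambda>t. - c t"])
qed

lemma in_rel_span_diff:
  "in_rel_span n x \<Longrightarrow> in_rel_span n (y :: 'k::field hc2) \<Longrightarrow> in_rel_span n (x - y)"
  using in_rel_span_add[of n x "- y"] in_rel_span_uminus[of n y] by simp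

lemma in_rel_span_diff_trans:
  assumes "in_rel_span n (x - y)" "in_rel_span n (y - (z :: 'k::field hc2))"
  shows "in_rel_span n (x - z)"
  using in_rel_span_add[OF assms] by simp

lemma sum_valid_child_eq_sum_Pow:
  "(\<Sum>J | valid_child n J \<and> Q J. (mbar_comp J :: 'k::field hc2))
     = (\<Sum>J\<in>Pow {1..n}. if valid_child n J \<and> Q J then mbar_comp J else 0)"
proof -
  have "{J. valid_child n J \<and> Q J} = {J \<in> Pow {1..n}. valid_child n J \<and> Q J}"
    by (auto simp: valid_child_def)
  then show ?thesis
    using sum.inter_filter[of "Pow {1..n}" mbar_comp "\<lambda>J. valid_child n J \<and> Q J"] by simp
qed

lemma elemA_commute: "elemA n a b = elemA n b a"
  unfolding elemA_def by (simp add: conj_commute conj_left_commute)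

lemma elemA_diff_eq_hc_rel:
  assumes "a \<noteq> b" "k \<noteq> a" "k \<noteq> b"
  shows "elemA n a b - elemA n k b = (hc_rel n k a b :: 'k::field hc2)"
  unfolding elemA_def hc_rel_def sum_valid_child_eq_sum_Pow sum_subtractf[symmetric]
  by (rule sum.cong) (auto simp: assms)

lemma elemB_diff_eq_hc_rel:
  assumes "i \<noteq> j" "i \<noteq> j'" "j \<noteq> j'"
  shows "elemB n i j - elemB n i j' = (hc_rel n j i j' - hc_rel n j' i j :: 'k::field hc2)"
  unfolding elemB_def hc_rel_def sum_valid_child_eq_sum_Pow sum_subtractf[symmetric]
  by (rule sum.cong) (auto simp: assms)

lemma elemA_diff_same_second_in_rel_span:
  assumes "a \<in> {1..n}" "b \<in> {1..n}" "k \<in> {1..n}" "a \<noteq> b" "k \<noteq> b"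
  shows "in_rel_span n (elemA n a b - elemA n k b :: 'k::field hc2)"
proof (cases "k = a")
  case True
  then show ?thesis by (simp add: in_rel_span_zero)
next
  case False
  then have "(k, a, b) \<in> rel_triples n"
    using assms by (intro rel_triplesI) auto
  then have "in_rel_span n (hc_rel n k a b :: 'k hc2)"
    using in_rel_span_relation by fastforce
  then show ?thesis
    by (simp add: elemA_diff_eq_hc_rel assms False)
qed

lemma elemA_diff_in_rel_span:
  assumes "a \<in> {1..n}" "b \<in> {1..n}" "c \<in> {1..n}" "d \<in> {1..n}" "a \<noteq> b" "c \<noteq> d"
  shows "in_rel_span n (elemA n a b - elemA n c d :: 'k::field hc2)"
proof (cases "c = b")
  case True
  then show ?thesis
    using elemA_diff_same_second_in_rel_span[of a n b d] assms by (simp add: elemA_commute)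
next
  case False
  have "in_rel_span n (elemA n a b - elemA n c b :: 'k hc2)"
    using assms False by (intro elemA_diff_same_second_in_rel_span) auto
  moreover have "in_rel_span n (elemA n b c - elemA n d c :: 'k hc2)"
    using assms False by (intro elemA_diff_same_second_in_rel_span) auto
  moreover have "elemA n b c - elemA n d c = (elemA n c b - elemA n c d :: 'k hc2)"
    by (metis elemA_commute)
  ultimately show ?thesis
    by (metis in_rel_span_diff_trans)
qed

lemma elemB_diff_in_rel_span:
  assumes "i \<in> {1..n}" "j \<in> {1..n}" "j' \<in> {1..n}" "i \<noteq> j" "i \<noteq> j'"
  shows "in_rel_span n (elemB n i j - elemB n i j' :: 'k::field hc2)"
proof (cases "j = j'")
  case True
  then show ?thesis by (simp add: in_rel_span_zero)
next
  case False
  have "(j, i, j') \<in> rel_triples n" "(j', i, j) \<in> rel_triples n"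
    using assms False by (auto intro: rel_triplesI)
  then have "in_rel_span n (hc_rel n j i j' - hc_rel n j' i j :: 'k hc2)"
    using in_rel_span_diff in_rel_span_relation by fastforce
  then show ?thesis
    by (simp add: elemB_diff_eq_hc_rel assms False)
qed

theorem mainTheorem20:
  fixes n :: nat
  assumes "2 \<le> n"
  shows "(\<forall>j1 j2 j1' j2'. j1 \<in> {1..n} \<and> j2 \<in> {1..n} \<and> j1 \<noteq> j2 \<and>
            j1' \<in> {1..n} \<and> j2' \<in> {1..n} \<and> j1' \<noteq> j2' \<longrightarrow>
            hc_eq n (elemA n j1 j2 :: 'k::field_char_0 hc2) (elemA n j1' j2'))
       \<and> (\<forall>i \<in> {1..n}. \<forall>j1 j1'. j1 \<in> {1..n} \<and> j1 \<noteq> i \<and> j1' \<in> {1..n} \<and> j1' \<noteq> i \<longrightarrow>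
            hc_eq n (elemB n i j1 :: 'k::field_char_0 hc2) (elemB n i j1'))"
proof (intro conjI allI impI ballI)
  fix a b c d :: nat
  assume "a \<in> {1..n} \<and> b \<in> {1..n} \<and> a \<noteq> b \<and> c \<in> {1..n} \<and> d \<in> {1..n} \<and> c \<noteq> d"
  then show "hc_eq n (elemA n a b :: 'k::field_char_0 hc2) (elemA n c d)"
    by (intro hc_eq_if_in_rel_span elemA_diff_in_rel_span) auto
next
  fix i j j' :: nat
  assume "i \<in> {1..n}" "j \<in> {1..n} \<and> j \<noteq> i \<and> j' \<in> {1..n} \<and> j' \<noteq> i"
  then show "hc_eq n (elemB n i j :: 'k::field_char_0 hc2) (elemB n i j')"
    by (intro hc_eq_if_in_rel_span elemB_diff_in_rel_span) auto
qed

end
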